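(* Let $A\subset(0,1)^n$ be an open subanalytic cell which is prepared with center $0$, and let $J=\{i\in\{1,\dots,n\}: x_i \text{ is asymptotically undetermined on } A\}$. Then for any nonzero $\gamma\in\mathbb{Q}^n$ with support in $J$, the image of the function $A\to\mathbb{R}$, $x\mapsto x^\gamma=\prod_i x_i^{\gamma_i}$, is not contained in any compact subset of $(0,+\infty)$.
   Context: "Subanalytic" means globally subanalytic (definable in the real field expanded by all restricted analytic functions). A function on a set is analytic if it extends analytically to an open neighbourhood; an analytic unit is an analytic function of constant nonzero sign. Subanalytic terms: finite compositions of restricted analytic functions, $+$, $\times$ and the functions $t\mapsto t^r$ ($t\ge0$), $0$ ($t<0$), $r\in\mathbb{Q}$. A subanalytic cell $A\subset\mathbb{R}^n$ is a set such that for every $i$, $\Pi_i(A)$ is a subanalytic cylinder over $\Pi_{i-1}(A)$ in the variable $x_i$, i.e. $\Pi_{i-1}(A)$ is defined quantifier-freely by subanalytic terms, $=,<$, and $\Pi_i(A)$ is the graph $x_i=a(x_{<i})$, or $x_i>a$, or $x_i<a$, or $a<x_i<b$ over $\Pi_{i-1}(A)$ with $a<b$ analytic subanalytic terms (for $i=1$: a point or an open interval). The cell is open if no $\Pi_i(A)$ is a graph. For an open cell $A\subset(0,1)^n$ the zero tuple is a center, with coordinates $x$ themselves. Write, for $i=1,\dots,n$, $\Pi_i(A)=\{x_{\le i}: x_{<i}\in\Pi_{i-1}(A),\ a_i(x_{<i})<x_i<b_i(x_{<i})\}$. A strong subanalytic unit on such an open cell $A'\subset(0,1)^k$ with center $0$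 is $U\circ\varphi$ with $\varphi(x)=(x^{\beta_1},\dots,x^{\beta_N})$ bounded on $A'$, $\beta_j\in\mathbb{Q}^k$, and $U$ an analytic unit on the closure of the image of $\varphi$. $x_i$ is asymptotically determined on $A$ if there is $C>0$ with $b_i<Ca_i$ on $\Pi_{i-1}(A)$, asymptotically undetermined otherwise. $\gamma\in\mathbb{Q}^n$ has support in $J$ if $\gamma_i=0$ for $i\notin J$. Preparedness (for open cells $A'\subset(0,1)^k$ with center $0$), defined by induction on $k$ for $J'$ a subset of the asymptotically undetermined indices: for $k=0$ everything is $\emptyset$-prepared; for $k\ge1$, $A'$ is $J'$-prepared if the family $\{a_k,b_k,b_k-a_k\}$ is $(J'\cap\{1,\dots,k-1\})$-prepared on $\Pi_{k-1}(A')$ with center $0$ and $0$ lies in the closure of the image of $a_k$; a finite family $\mathcal{F}$ of subanalytic functions on $A'$ is $J'$-prepared on $A'$ if $A'$ is $J'$-prepared and each $g\in\mathcal{F}$ is either $0$ on $A'$ or equals $x^\alpha u(x)$ with $u$ a strong subanalytic unit with center $0$ and $\alpha$ with support in $J'$. "Prepared" means $J'$-prepared with $J'$ the set of all asymptotically undetermined indices. *)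

theory Defs
  imports "HOL-Analysis.Analysis"
begin

text \<open>Points of R^k are real lists of length k; coordinate i (0-based) is x!i,
  corresponding to the paper's x_(i+1).\<close>

definition vecs :: "nat \<Rightarrow> real list set" where
  "vecs k = {x. length x = k}"

definition proj :: "nat \<Rightarrow> real list set \<Rightarrow> real list set" where
  "proj i A = (\<lambda>x. take i x) ` A"

text \<open>Openness / closure / boundedness in R^k (sup-norm topology = Euclidean topology).\<close>
definition lopen :: "nat \<Rightarrow> real list set \<Rightarrow> bool" where
  "lopen k U \<longleftrightarrow> U \<subseteq> vecs k \<and>
     (\<forall>p\<in>U. \<exists>r>0. \<forall>y\<in>vecs k. (\<forall>i<k. \<bar>y!i - p!i\<bar> < r) \<longrightarrow> y \<in> U)"

definition lclosure :: "nat \<Rightarrow> real list set \<Rightarrow> real list set" where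
  "lclosure k S = {y\<in>vecs k. \<forall>e>0. \<exists>z\<in>S. \<forall>i<k. \<bar>z!i - y!i\<bar> < e}"

definition lbounded :: "real list set \<Rightarrow> bool" where
  "lbounded S \<longleftrightarrow> (\<exists>M. \<forall>y\<in>S. \<forall>i<length y. \<bar>y!i\<bar> \<le> M)"

text \<open>Real analyticity at a point: locally the sum of an (absolutely) convergent
  multivariate power series; multi-indices are nat lists of length k.\<close>
definition real_analytic_at :: "nat \<Rightarrow> (real list \<Rightarrow> real) \<Rightarrow> real list \<Rightarrow> bool" where
  "real_analytic_at k g p \<longleftrightarrow> (\<exists>r>0. \<exists>c :: nat list \<Rightarrow> real.
     \<forall>y\<in>vecs k. (\<forall>i<k. \<bar>y!i - p!i\<bar> < r) \<longrightarrow>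
       ((\<lambda>\<alpha>. c \<alpha> * (\<Prod>i<k. (y!i - p!i) ^ (\<alpha>!i))) has_sum g y) {\<alpha>. length \<alpha> = k})"

definition analytic_on_set :: "nat \<Rightarrow> (real list \<Rightarrow> real) \<Rightarrow> real list set \<Rightarrow> bool" where
  "analytic_on_set k f S \<longleftrightarrow> (\<exists>U g. lopen k U \<and> S \<subseteq> U \<and>
     (\<forall>p\<in>U. real_analytic_at k g p) \<and> (\<forall>y\<in>S. g y = f y))"

definition analytic_unit_on :: "nat \<Rightarrow> (real list \<Rightarrow> real) \<Rightarrow> real list set \<Rightarrow> bool" where
  "analytic_unit_on k f S \<longleftrightarrow> analytic_on_set k f S \<and>
     ((\<forall>y\<in>S. f y > 0) \<or> (\<forall>y\<in>S. f y < 0))"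

definition cube :: "nat \<Rightarrow> real list set" where
  "cube m = {x\<in>vecs m. \<forall>i<m. \<bar>x!i\<bar> \<le> 1}"

definition restricted_analytic :: "nat \<Rightarrow> (real list \<Rightarrow> real) \<Rightarrow> bool" where
  "restricted_analytic m F \<longleftrightarrow> analytic_on_set m F (cube m) \<and>
     (\<forall>x\<in>vecs m. x \<notin> cube m \<longrightarrow> F x = 0)"

definition rpow :: "rat \<Rightarrow> real \<Rightarrow> real" where
  "rpow r t = (if t > 0 then t powr (real_of_rat r)
               else if t = 0 then (if r = 0 then 1 else 0) else 0)"

inductive sa_term :: "nat \<Rightarrow> (real list \<Rightarrow> real) \<Rightarrow> bool" where
  var: "j < m \<Longrightarrow> sa_term m (\<lambda>x. x!j)"
| add: "sa_term m f \<Longrightarrow> sa_term m g \<Longrightarrow> sa_term m (\<lambda>x. f x + g x)"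
| mult: "sa_term m f \<Longrightarrow> sa_term m g \<Longrightarrow> sa_term m (\<lambda>x. f x * g x)"
| pow: "sa_term m f \<Longrightarrow> sa_term m (\<lambda>x. rpow r (f x))"
| ran: "restricted_analytic k F \<Longrightarrow> length fs = k \<Longrightarrow> (\<forall>f\<in>set fs. sa_term m f) \<Longrightarrow>
          sa_term m (\<lambda>x. F (map (\<lambda>f. f x) fs))"

text \<open>Open subanalytic cell in R^n (every Pi_(i+1)(A) is a band a < x_i < b over Pi_i(A),
  with a < b analytic subanalytic terms; for i = 0 an open interval with constant ends).\<close>
definition open_cell :: "nat \<Rightarrow> real list set \<Rightarrow> bool" where
  "open_cell n A \<longleftrightarrow> A \<noteq> {} \<and> A \<subseteq> vecs n \<and>
    (\<forall>i<n. \<exists>a b. sa_term i a \<and> sa_term i b \<and>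
        analytic_on_set i a (proj i A) \<and> analytic_on_set i b (proj i A) \<and>
        (\<forall>x\<in>proj i A. a x < b x) \<and>
        proj (Suc i) A = {x @ [t] | x t. x \<in> proj i A \<and> a x < t \<and> t < b x})"

definition unit_box :: "nat \<Rightarrow> real list set" where
  "unit_box n = {x\<in>vecs n. \<forall>i<n. 0 < x!i \<and> x!i < 1}"

text \<open>The boundary functions a_i, b_i of the cell (canonically: inf/sup of the fibres).\<close>
definition lowb :: "real list set \<Rightarrow> nat \<Rightarrow> real list \<Rightarrow> real" where
  "lowb A i x = Inf {t. x @ [t] \<in> proj (Suc i) A}"

definition uppb :: "real list set \<Rightarrow> nat \<Rightarrow> real list \<Rightarrow> real" where
  "uppb A i x = Sup {t. x @ [t] \<in> proj (Suc i) A}"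

definition asymp_determined :: "real list set \<Rightarrow> nat \<Rightarrow> bool" where
  "asymp_determined A i \<longleftrightarrow> (\<exists>C>0. \<forall>x\<in>proj i A. uppb A i x < C * lowb A i x)"

definition undet :: "nat \<Rightarrow> real list set \<Rightarrow> nat set" where
  "undet n A = {i. i < n \<and> \<not> asymp_determined A i}"

definition monom :: "real list \<Rightarrow> rat list \<Rightarrow> real" where
  "monom x \<gamma> = (\<Prod>i<length x. (x!i) powr (real_of_rat (\<gamma>!i)))"

definition support_in :: "rat list \<Rightarrow> nat set \<Rightarrow> bool" where
  "support_in \<gamma> J \<longleftrightarrow> (\<forall>i<length \<gamma>. i \<notin> J \<longrightarrow> \<gamma>!i = 0)"

definition strong_unit :: "nat \<Rightarrow> real list set \<Rightarrow> (real list \<Rightarrow> real) \<Rightarrow> bool" where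
  "strong_unit k B u \<longleftrightarrow> (\<exists>(\<beta>s :: rat list list) U.
     (\<forall>\<beta>\<in>set \<beta>s. length \<beta> = k) \<and>
     lbounded ((\<lambda>x. map (monom x) \<beta>s) ` B) \<and>
     analytic_unit_on (length \<beta>s) U (lclosure (length \<beta>s) ((\<lambda>x. map (monom x) \<beta>s) ` B)) \<and>
     (\<forall>x\<in>B. u x = U (map (monom x) \<beta>s)))"

text \<open>J-preparedness of an open cell A \<subseteq> (0,1)^k (recursion on k), with the
  family condition for {a_k, b_k, b_k - a_k} on Pi_(k-1)(A) inlined.\<close>
fun prepared :: "nat \<Rightarrow> nat set \<Rightarrow> real list set \<Rightarrow> bool" where
  "prepared 0 J A = True"
| "prepared (Suc k) J A =
     (prepared k (J \<inter> {..<k}) (proj k A) \<and>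
      (\<forall>g\<in>{lowb A k, uppb A k, (\<lambda>x. uppb A k x - lowb A k x)}.
         (\<forall>x\<in>proj k A. g x = 0) \<or>
         (\<exists>\<alpha> u. length \<alpha> = k \<and> support_in \<alpha> (J \<inter> {..<k}) \<and> strong_unit k (proj k A) u \<and>
              (\<forall>x\<in>proj k A. g x = monom x \<alpha> * u x))) \<and>
      (0::real) \<in> closure (lowb A k ` proj k A))"

end

theory Submission
  imports Defs
begin

text \<open>Suppose x^\<gamma> stayed in a compact set [c, C] \<subseteq> (0, \<infinity>) on A, and let m be the last
  index with \<gamma>_m \<noteq> 0. Then x^\<gamma> = P(x_1, ..., x_(m-1)) * x_m^(\<gamma>_m), so over each fixed
  (x_1, ..., x_(m-1)) the coordinate x_m can only vary by the factor (C/c)^(1/|\<gamma>_m|). Hence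
  b_m is bounded by a constant multiple of a_m, i.e. x_m is asymptotically determined,
  contradicting that \<gamma> has support in the undetermined indices.\<close>

lemma compact_pos_reals_obtain_bounds:
  fixes K :: "real set"
  assumes "compact K" "K \<subseteq> {0<..}" "K \<noteq> {}"
  obtains c C where "0 < c" "c \<le> C" "K \<subseteq> {c..C}"
proof
  have bdd: "bdd_below K" "bdd_above K"
    using compact_imp_bounded[OF assms(1)] by (auto simp: bounded_imp_bdd_below bounded_imp_bdd_above)
  have "Inf K \<in> K"
    using assms bdd by (simp add: closed_contains_Inf compact_imp_closed)
  then show "0 < Inf K" using assms(2) by auto
  show "K \<subseteq> {Inf K..Sup K}" using bdd by (auto intro: cInf_lower cSup_upper)
  then show "Inf K \<le> Sup K" using assms(3) by fastforce
qed

lemma last_nonzero_index: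
  fixes \<gamma> :: "'a::zero list"
  assumes "length \<gamma> = n" "\<gamma> \<noteq> replicate n 0"
  obtains m where "m < n" "\<gamma>!m \<noteq> 0" "\<And>i. m < i \<Longrightarrow> i < n \<Longrightarrow> \<gamma>!i = 0"
proof -
  define S where "S = {i. i < n \<and> \<gamma>!i \<noteq> 0}"
  have "S \<noteq> {}"
    using assms by (auto simp: S_def list_eq_iff_nth_eq)
  moreover have "finite S" by (simp add: S_def)
  ultimately have "Max S \<in> S" "\<And>i. i \<in> S \<Longrightarrow> i \<le> Max S" by auto
  then show thesis
    by (intro that[of "Max S"]) (auto simp: S_def not_less[symmetric])
qed

lemma monom_pos:
  assumes "\<And>i. i < length x \<Longrightarrow> 0 < x!i"
  shows "0 < monom x \<gamma>"
  unfolding monom_def using assms by (intro prod_pos) (metis lessThan_iff order_less_irrefl powr_gt_zero)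

text \<open>Since 0 powr 0 = 0, the coordinates with zero exponent must be nonzero to drop out.\<close>
lemma monom_eq_monom_take_mult:
  assumes "length y = n" "m < n"
    and "\<And>i. m < i \<Longrightarrow> i < n \<Longrightarrow> \<gamma>!i = 0"
    and "\<And>i. m < i \<Longrightarrow> i < n \<Longrightarrow> y!i \<noteq> 0"
  shows "monom y \<gamma> = monom (take m y) \<gamma> * (y!m) powr real_of_rat (\<gamma>!m)"
proof -
  have "monom y \<gamma> = (\<Prod>i<n. (y!i) powr real_of_rat (\<gamma>!i))"
    by (simp add: monom_def assms(1))
  also have "\<dots> = (\<Prod>i<Suc m. (y!i) powr real_of_rat (\<gamma>!i))"
    using assms(2-4) by (intro prod.mono_neutral_right) auto
  also have "\<dots> = monom (take m y) \<gamma> * (y!m) powr real_of_rat (\<gamma>!m)"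
    using assms(1,2) by (simp add: monom_def min_def)
  finally show ?thesis .
qed

lemma powr_ratio_bound:
  fixes P s t g c C :: real
  assumes "0 < P" "0 < s" "0 < t" "g \<noteq> 0" "0 < c"
    and "c \<le> P * s powr g" "P * s powr g \<le> C"
    and "c \<le> P * t powr g" "P * t powr g \<le> C"
  shows "t \<le> exp ((ln C - ln c) / \<bar>g\<bar>) * s"
proof -
  have ln_bounds: "ln c \<le> ln P + g * ln u \<and> ln P + g * ln u \<le> ln C"
    if "0 < u" "c \<le> P * u powr g" "P * u powr g \<le> C" for u
  proof -
    have "0 < P * u powr g" using assms(1) that(1) by simp
    then have "ln c \<le> ln (P * u powr g)" "ln (P * u powr g) \<le> ln C"
      using that assms(5) by auto
    then show ?thesis using assms(1) that(1) by (simp add: ln_mult)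
  qed
  have ln_s: "ln c \<le> ln P + g * ln s" "ln P + g * ln s \<le> ln C"
    using ln_bounds assms(2,6,7) by auto
  have ln_t: "ln c \<le> ln P + g * ln t" "ln P + g * ln t \<le> ln C"
    using ln_bounds assms(3,8,9) by auto
  have "\<bar>g\<bar> * \<bar>ln t - ln s\<bar> \<le> ln C - ln c"
    using ln_s ln_t by (simp add: abs_mult[symmetric] algebra_simps abs_le_iff)
  then have "\<bar>g\<bar> * (ln t - ln s) \<le> ln C - ln c"
    by (meson abs_ge_self abs_ge_zero mult_left_mono order_trans)
  then have "ln t - ln s \<le> (ln C - ln c) / \<bar>g\<bar>"
    using assms(4) by (simp add: pos_le_divide_eq mult.commute)
  then have "ln t \<le> ln s + (ln C - ln c) / \<bar>g\<bar>" by simp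
  then have "exp (ln t) \<le> exp (ln s + (ln C - ln c) / \<bar>g\<bar>)" by simp
  then show ?thesis
    using assms(2,3) by (simp add: exp_add mult.commute)
qed

lemma Sup_lt_mult_Inf:
  fixes F :: "real set"
  assumes "F \<noteq> {}" "F \<subseteq> {0<..}" "0 < D"
    and ratio: "\<And>s t. s \<in> F \<Longrightarrow> t \<in> F \<Longrightarrow> t \<le> D * s"
  shows "Sup F < 2 * D * Inf F"
proof -
  obtain s0 where s0: "s0 \<in> F" using assms(1) by blast
  have Sup_le: "Sup F \<le> D * s" if "s \<in> F" for s
    using assms(1) by (rule cSup_least) (rule ratio[OF that])
  have "Sup F / D \<le> Inf F"
    using assms(1)
  proof (rule cInf_greatest)
    fix s assume "s \<in> F"
    then show "Sup F / D \<le> s"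
      using Sup_le by (simp add: pos_divide_le_eq[OF assms(3)] mult.commute[of s D])
  qed
  then have Sup_le_Inf: "Sup F \<le> D * Inf F"
    using assms(3) by (simp add: pos_divide_le_eq mult.commute[of D])
  have "bdd_above F" using ratio s0 by (intro bdd_aboveI[of _ "D * s0"]) auto
  then have "s0 \<le> Sup F" using s0 by (intro cSup_upper)
  moreover have "0 < s0" using assms(2) s0 by auto
  ultimately have "0 < D * Inf F" using Sup_le_Inf by linarith
  then show ?thesis
    using Sup_le_Inf by (simp add: mult.assoc)
qed

lemma fibre_eq_image_nth:
  assumes "A \<subseteq> vecs n" "m < n"
  shows "{t. x @ [t] \<in> proj (Suc m) A} = (\<lambda>y. y!m) ` {y\<in>A. take m y = x}"
proof -
  have "take (Suc m) y = take m y @ [y!m]" if "y \<in> A" for y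
    using that assms by (intro take_Suc_conv_app_nth) (auto simp: vecs_def)
  then show ?thesis
    by (force simp: proj_def)
qed

lemma asymp_determined_if_fibre_ratio_bounded:
  assumes "A \<subseteq> unit_box n" "m < n" "0 < D"
    and ratio: "\<And>y z. y \<in> A \<Longrightarrow> z \<in> A \<Longrightarrow> take m y = take m z \<Longrightarrow> z!m \<le> D * y!m"
  shows "asymp_determined A m"
  unfolding asymp_determined_def
proof (intro exI[of _ "2 * D"] conjI ballI)
  show "0 < 2 * D" using assms(3) by simp
  fix x assume x: "x \<in> proj m A"
  define F where "F = {t. x @ [t] \<in> proj (Suc m) A}"
  have A_vecs: "A \<subseteq> vecs n" using assms(1) by (auto simp: unit_box_def)
  have F: "F = (\<lambda>y. y!m) ` {y\<in>A. take m y = x}"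
    unfolding F_def using fibre_eq_image_nth[OF A_vecs assms(2)] .
  have "F \<noteq> {}" using x by (auto simp: F proj_def)
  moreover have "F \<subseteq> {0<..}"
    using assms(1,2) by (auto simp: F unit_box_def)
  moreover have "t \<le> D * s" if "s \<in> F" "t \<in> F" for s t
    using that ratio by (auto simp: F)
  ultimately have "Sup F < 2 * D * Inf F"
    using Sup_lt_mult_Inf assms(3) by blast
  then show "uppb A m x < 2 * D * lowb A m x"
    by (simp add: uppb_def lowb_def F_def)
qed

theorem lemma3p5:
  fixes n :: nat and A :: "real list set" and \<gamma> :: "rat list"
  assumes "open_cell n A"
    and "A \<subseteq> unit_box n"
    and "prepared n (undet n A) A"
    and "length \<gamma> = n"
    and "\<gamma> \<noteq> replicate n 0"
    and "support_in \<gamma> (undet n A)"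
  shows "\<not> (\<exists>K. compact K \<and> K \<subseteq> {0<..} \<and> (\<lambda>x. monom x \<gamma>) ` A \<subseteq> K)"
proof
  assume "\<exists>K. compact K \<and> K \<subseteq> {0<..} \<and> (\<lambda>x. monom x \<gamma>) ` A \<subseteq> K"
  then obtain K where K: "compact K" "K \<subseteq> {0<..}" "(\<lambda>x. monom x \<gamma>) ` A \<subseteq> K" by blast
  have "A \<noteq> {}" using assms(1) by (simp add: open_cell_def)
  with K obtain c C where c: "0 < c" and bounds: "\<And>y. y \<in> A \<Longrightarrow> monom y \<gamma> \<in> {c..C}"
    by (metis compact_pos_reals_obtain_bounds image_is_empty image_subset_iff subset_empty subset_iff)
  obtain m where m: "m < n" "\<gamma>!m \<noteq> 0" and last: "\<And>i. m < i \<Longrightarrow> i < n \<Longrightarrow> \<gamma>!i = 0"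
    using last_nonzero_index assms(4,5) by blast
  have "m \<in> undet n A"
    using assms(4,6) m by (auto simp: support_in_def)
  moreover have "asymp_determined A m"
  proof (rule asymp_determined_if_fibre_ratio_bounded[OF assms(2) m(1) exp_gt_zero])
    fix y z assume yz: "y \<in> A" "z \<in> A" and take_eq: "take m y = take m z"
    have box: "length w = n" "\<And>i. i < n \<Longrightarrow> 0 < w!i" if "w \<in> A" for w
      using that assms(2) by (auto simp: unit_box_def vecs_def)
    have split: "monom w \<gamma> = monom (take m y) \<gamma> * (w!m) powr real_of_rat (\<gamma>!m)" if "w \<in> {y, z}" for w
      using that take_eq box[of w] yz m(1) last
      by (metis (no_types) empty_iff insert_iff monom_eq_monom_take_mult order_less_irrefl)
    have "0 < monom (take m y) \<gamma>"
      using box[OF yz(1)] m(1) by (intro monom_pos) auto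
    then show "z!m \<le> exp ((ln C - ln c) / \<bar>real_of_rat (\<gamma>!m)\<bar>) * y!m"
      by (rule powr_ratio_bound[OF _ _ _ _ c])
        (use split bounds[OF yz(1)] bounds[OF yz(2)] box[OF yz(1)] box[OF yz(2)] m in auto)
  qed
  ultimately show False by (simp add: undet_def)
qed

end
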